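(* Let $\mu$ be a singular cardinal with $\operatorname{cf}(\mu)=\theta$, and suppose $\mathfrak{d}^*_\mu=\kappa$. Then $\mathfrak{d}_\mu=\kappa$.
   Context: For $f,g\in{}^\mu\mu$, $f\le^* g$ means $|\{\beta<\mu:f(\beta)>g(\beta)\}|<\mu$ (size less than $\mu$, not merely bounded), and $\mathfrak{d}_\mu$ is the minimal cardinality of a family $\mathcal{D}\subseteq{}^\mu\mu$ such that every $f\in{}^\mu\mu$ is $\le^*$ some member of $\mathcal{D}$. For $f,g\in{}^\mu\theta$, $f<^* g$ means $|\{\beta<\mu:f(\beta)\ge g(\beta)\}|<\mu$, and $\mathfrak{d}^*_\mu$ is the minimal cardinality of a family $\mathcal{D}\subseteq{}^\mu\theta$ such that every $f\in{}^\mu\theta$ is $<^*$ some member of $\mathcal{D}$. *)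

theory Defs
  imports Main
begin

unbundle cardinal_syntax

text \<open>A cardinal mu is represented by a type 'm together with a cardinal
  well-order r on UNIV (card_order r); elements of 'm are the ordinals below mu,
  ordered by r.  Likewise theta = cf(mu) is a type 'c with a card_order t.\<close>

definition singular_card :: "'a rel \<Rightarrow> bool" where
  "singular_card r \<equiv> Cinfinite r \<and> \<not> regularCard r"

definition is_cof :: "'a rel \<Rightarrow> 'c rel \<Rightarrow> bool" where
  "is_cof r t \<equiv> (\<exists>K. K \<subseteq> Field r \<and> cofinal K r \<and> |K| =o t)
     \<and> (\<forall>K. K \<subseteq> Field r \<and> cofinal K r \<longrightarrow> t \<le>o |K| )"

definition le_star :: "'m rel \<Rightarrow> ('m \<Rightarrow> 'm) \<Rightarrow> ('m \<Rightarrow> 'm) \<Rightarrow> bool" where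
  "le_star r f g \<equiv> |{\<beta>. (g \<beta>, f \<beta>) \<in> r \<and> g \<beta> \<noteq> f \<beta>}| <o r"

definition less_star :: "'m rel \<Rightarrow> 'c rel \<Rightarrow> ('m \<Rightarrow> 'c) \<Rightarrow> ('m \<Rightarrow> 'c) \<Rightarrow> bool" where
  "less_star r t f g \<equiv> |{\<beta>. (g \<beta>, f \<beta>) \<in> t}| <o r"

definition dominating :: "'m rel \<Rightarrow> ('m \<Rightarrow> 'm) set \<Rightarrow> bool" where
  "dominating r D \<equiv> \<forall>f. \<exists>g\<in>D. le_star r f g"

definition dominating_star :: "'m rel \<Rightarrow> 'c rel \<Rightarrow> ('m \<Rightarrow> 'c) set \<Rightarrow> bool" where
  "dominating_star r t D \<equiv> \<forall>f. \<exists>g\<in>D. less_star r t f g"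

definition dmu_eq :: "'m rel \<Rightarrow> 'k rel \<Rightarrow> bool" where
  "dmu_eq r \<kappa> \<equiv> (\<exists>D. dominating r D \<and> |D| =o \<kappa>)
     \<and> (\<forall>D. dominating r D \<longrightarrow> \<kappa> \<le>o |D| )"

definition dmu_star_eq :: "'m rel \<Rightarrow> 'c rel \<Rightarrow> 'k rel \<Rightarrow> bool" where
  "dmu_star_eq r t \<kappa> \<equiv> (\<exists>D. dominating_star r t D \<and> |D| =o \<kappa>)
     \<and> (\<forall>D. dominating_star r t D \<longrightarrow> \<kappa> \<le>o |D| )"

end

theory Submission
  imports Defs
begin

text \<open>Fix a cofinal sequence \<open>\<phi> : \<theta> \<rightarrow> \<mu>\<close>. Every \<open>x < \<mu>\<close> lies below some \<open>\<phi> (H x)\<close>, and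
  since a proper initial segment of \<open>\<theta> = cf \<mu>\<close> has a bounded \<open>\<phi>\<close>-image, each \<open>j < \<theta>\<close> has an
  upper bound \<open>e j < \<mu>\<close> of all \<open>\<phi> i\<close> with \<open>i \<le> j\<close>. Then \<open>H x \<le> j\<close> implies \<open>x < e j\<close>, and
  composing with \<open>H\<close> and \<open>e\<close> turns dominating families in \<open>\<^sup>\<mu>\<mu>\<close> into dominating families
  in \<open>\<^sup>\<mu>\<theta>\<close> and back, without increasing their size.\<close>

lemma card_order_linear_order: "card_order r \<Longrightarrow> linear_order r"
  using card_order_on_well_order_on unfolding well_order_on_def by blast

lemma card_order_refl: "card_order r \<Longrightarrow> (x, x) \<in> r"
  using card_order_linear_order
  unfolding linear_order_on_def partial_order_on_def preorder_on_def refl_on_def by blast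

lemma card_order_total: "card_order r \<Longrightarrow> (x, y) \<in> r \<or> (y, x) \<in> r"
  using card_order_linear_order[of r] card_order_refl[of r x]
  unfolding linear_order_on_def total_on_def by (cases "x = y") auto

lemma card_order_antisym: "card_order r \<Longrightarrow> (x, y) \<in> r \<Longrightarrow> (y, x) \<in> r \<Longrightarrow> x = y"
  using card_order_linear_order
  unfolding linear_order_on_def partial_order_on_def antisym_def by blast

lemma card_order_trans: "card_order r \<Longrightarrow> (x, y) \<in> r \<Longrightarrow> (y, z) \<in> r \<Longrightarrow> (x, z) \<in> r"
  using card_order_linear_order
  unfolding linear_order_on_def partial_order_on_def preorder_on_def trans_def by blast

lemma card_order_finite_has_max:
  assumes r: "card_order r" and "finite K" "K \<noteq> {}"
  shows "\<exists>m\<in>K. \<forall>k\<in>K. (k, m) \<in> r"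
  using assms(2,3)
proof (induction K rule: finite_ne_induct)
  case (singleton x)
  then show ?case using card_order_refl[OF r] by blast
next
  case (insert x F)
  then obtain m where m: "m \<in> F" "\<forall>k\<in>F. (k, m) \<in> r" by blast
  show ?case
  proof (cases "(x, m) \<in> r")
    case True
    then show ?thesis using m by blast
  next
    case False
    then have "(m, x) \<in> r" using card_order_total[OF r] by blast
    then show ?thesis using m card_order_refl[OF r] card_order_trans[OF r] by blast
  qed
qed

lemma cofinal_card_order_infinite:
  assumes r: "card_order r" and K: "cofinal K r"
  shows "infinite K"
proof
  assume "finite K"
  have Fr: "Field r = UNIV" using r card_order_on_Card_order by blast
  then have "K \<noteq> {}" using K unfolding cofinal_def by blast
  then obtain m where m: "m \<in> K" "\<forall>k\<in>K. (k, m) \<in> r"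
    using card_order_finite_has_max[OF r \<open>finite K\<close>] by blast
  obtain b where "b \<in> K" "m \<noteq> b" "(m, b) \<in> r" using K Fr unfolding cofinal_def by blast
  then show False using m card_order_antisym[OF r] by blast
qed

lemma card_of_under_ordLess_infinite:
  assumes t: "card_order t" and inf: "infinite (UNIV :: 'c set)"
  shows "|{j. (j, i) \<in> t}| <o (t :: 'c rel)"
proof -
  have Ct: "Card_order t" and Ft: "Field t = UNIV" using t card_order_on_Card_order by blast+
  have "{j. (j, i) \<in> t} = underS t i \<union> {i}"
    using card_order_refl[OF t] unfolding underS_def by blast
  moreover have "|underS t i| <o t" using card_of_underS[OF Ct] Ft by blast
  moreover have "|{i}| <o |UNIV :: 'c set|"
    using finite_ordLess_infinite[of "|{i}|" "|UNIV :: 'c set|"] inf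
    by (simp add: card_of_Well_order Field_card_of card_of_well_order_on)
  then have "|{i}| <o t" using card_of_Field_ordIso[OF Ct] Ft ordLess_ordIso_trans by metis
  ultimately show ?thesis using card_of_Un_ordLess_infinite_Field[OF _ Ct] inf Ft by metis
qed

lemma less_star_comp_if_le_star:
  assumes below: "\<And>x j. (H x, j) \<in> t \<Longrightarrow> (x, e j) \<in> r \<and> x \<noteq> e j"
    and "le_star r (e \<circ> f) g"
  shows "less_star r t f (H \<circ> g)"
proof -
  have "{\<beta>. ((H \<circ> g) \<beta>, f \<beta>) \<in> t} \<subseteq> {\<beta>. (g \<beta>, (e \<circ> f) \<beta>) \<in> r \<and> g \<beta> \<noteq> (e \<circ> f) \<beta>}"
    using below by auto
  then show ?thesis
    using assms(2) card_of_mono1 ordLeq_ordLess_trans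
    unfolding le_star_def less_star_def by blast
qed

lemma le_star_comp_if_less_star:
  assumes r: "card_order r" and t: "card_order t"
    and below: "\<And>x j. (H x, j) \<in> t \<Longrightarrow> (x, e j) \<in> r \<and> x \<noteq> e j"
    and "less_star r t (H \<circ> f) g"
  shows "le_star r f (e \<circ> g)"
proof -
  have "{\<beta>. ((e \<circ> g) \<beta>, f \<beta>) \<in> r \<and> (e \<circ> g) \<beta> \<noteq> f \<beta>} \<subseteq> {\<beta>. (g \<beta>, (H \<circ> f) \<beta>) \<in> t}"
  proof (rule subsetI, rule ccontr)
    fix \<beta>
    assume above: "\<beta> \<in> {\<beta>. ((e \<circ> g) \<beta>, f \<beta>) \<in> r \<and> (e \<circ> g) \<beta> \<noteq> f \<beta>}"
      and "\<beta> \<notin> {\<beta>. (g \<beta>, (H \<circ> f) \<beta>) \<in> t}"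
    then have "(H (f \<beta>), g \<beta>) \<in> t" using card_order_total[OF t] by auto
    then have "(f \<beta>, e (g \<beta>)) \<in> r" "f \<beta> \<noteq> e (g \<beta>)" using below by blast+
    then show False using above card_order_antisym[OF r] by auto
  qed
  then show ?thesis
    using assms(4) card_of_mono1 ordLeq_ordLess_trans
    unfolding le_star_def less_star_def by blast
qed

lemma dominating_star_comp_image:
  assumes below: "\<And>x j. (H x, j) \<in> t \<Longrightarrow> (x, e j) \<in> r \<and> x \<noteq> e j"
    and "dominating r D"
  shows "dominating_star r t ((\<circ>) H ` D)"
  unfolding dominating_star_def
proof
  fix f
  obtain g where "g \<in> D" "le_star r (e \<circ> f) g"
    using assms(2) unfolding dominating_def by blast
  then show "\<exists>g\<in>(\<circ>) H ` D. less_star r t f g"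
    using less_star_comp_if_le_star[where H=H and e=e, OF below] by blast
qed

lemma dominating_comp_image:
  assumes "card_order r" "card_order t"
    and below: "\<And>x j. (H x, j) \<in> t \<Longrightarrow> (x, e j) \<in> r \<and> x \<noteq> e j"
    and "dominating_star r t D"
  shows "dominating r ((\<circ>) e ` D)"
  unfolding dominating_def
proof
  fix f
  obtain g where "g \<in> D" "less_star r t (H \<circ> f) g"
    using assms(4) unfolding dominating_star_def by blast
  then show "\<exists>g\<in>(\<circ>) e ` D. le_star r f g"
    using le_star_comp_if_less_star[where H=H and e=e, OF assms(1,2) below] by blast
qed

lemma dmu_eq_if_dmu_star_eq:
  assumes r: "card_order r" and t: "card_order t"
    and below: "\<And>x j. (H x, j) \<in> t \<Longrightarrow> (x, e j) \<in> r \<and> x \<noteq> e j"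
    and ds: "dmu_star_eq r t \<kappa>"
  shows "dmu_eq r \<kappa>"
proof -
  have lower: "\<kappa> \<le>o |D|" if "dominating r D" for D
  proof -
    have "\<kappa> \<le>o |(\<circ>) H ` D|"
      using ds dominating_star_comp_image[where H=H and e=e, OF below that] unfolding dmu_star_eq_def by blast
    then show ?thesis using card_of_image ordLeq_transitive by blast
  qed
  obtain D where D: "dominating_star r t D" "|D| =o \<kappa>"
    using ds unfolding dmu_star_eq_def by blast
  have dom: "dominating r ((\<circ>) e ` D)" using dominating_comp_image[where H=H and e=e, OF r t below D(1)] .
  have "|(\<circ>) e ` D| \<le>o \<kappa>" using card_of_image D(2) ordLeq_ordIso_trans by blast
  then have "|(\<circ>) e ` D| =o \<kappa>" using lower[OF dom] ordIso_iff_ordLeq by blast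
  then show ?thesis unfolding dmu_eq_def using dom lower by blast
qed

lemma cofinal_sequence_bounds:
  fixes r :: "'m rel" and t :: "'c rel"
  assumes r: "card_order r" and t: "card_order t" and cof: "is_cof r t"
  obtains H :: "'m \<Rightarrow> 'c" and e :: "'c \<Rightarrow> 'm"
  where "\<And>x j. (H x, j) \<in> t \<Longrightarrow> (x, e j) \<in> r \<and> x \<noteq> e j"
proof -
  have Fr: "Field r = UNIV" and Ft: "Field t = UNIV" and Ct: "Card_order t"
    using card_order_on_Card_order r t by metis+
  obtain K where K: "cofinal K r" "|K| =o t"
    using cof unfolding is_cof_def by blast
  have "|K| =o |UNIV :: 'c set|"
    using K(2) card_of_Field_ordIso[OF Ct] Ft ordIso_symmetric ordIso_transitive by metis
  then obtain g where "bij_betw g K (UNIV :: 'c set)" using card_of_ordIso by blast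
  then obtain \<phi> :: "'c \<Rightarrow> 'm" where \<phi>: "bij_betw \<phi> UNIV K" using bij_betw_inv_into by blast
  have "infinite (UNIV :: 'c set)"
    using cofinal_card_order_infinite[OF r K(1)] \<phi> bij_betw_finite by blast
  then have small: "|{i. (i, j) \<in> t}| <o t" for j
    using card_of_under_ordLess_infinite[OF t] by blast
  have "\<exists>i. (x, \<phi> i) \<in> r \<and> x \<noteq> \<phi> i" for x
  proof -
    obtain b where "b \<in> K" "x \<noteq> b" "(x, b) \<in> r" using K(1) Fr unfolding cofinal_def by blast
    moreover obtain i where "b = \<phi> i" using \<open>b \<in> K\<close> \<phi> unfolding bij_betw_def by blast
    ultimately show ?thesis by blast
  qed
  then obtain H where H: "(x, \<phi> (H x)) \<in> r" "x \<noteq> \<phi> (H x)" for x by metis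
  \<comment> \<open>An unbounded \<open>\<phi>\<close>-image of an initial segment would be cofinal of size \<open>< cf \<mu>\<close>.\<close>
  have "\<exists>b. \<forall>i. (i, j) \<in> t \<longrightarrow> (\<phi> i, b) \<in> r" for j
  proof (rule ccontr)
    assume unbounded: "\<nexists>b. \<forall>i. (i, j) \<in> t \<longrightarrow> (\<phi> i, b) \<in> r"
    have "cofinal (\<phi> ` {i. (i, j) \<in> t}) r" unfolding cofinal_def
    proof
      fix b
      obtain i where i: "(i, j) \<in> t" "(\<phi> i, b) \<notin> r" using unbounded by blast
      then have "(b, \<phi> i) \<in> r" "b \<noteq> \<phi> i"
        using card_order_refl[OF r] card_order_total[OF r] by blast+
      then show "\<exists>c\<in>\<phi> ` {i. (i, j) \<in> t}. b \<noteq> c \<and> (b, c) \<in> r" using i(1) by blast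
    qed
    then have "t \<le>o |\<phi> ` {i. (i, j) \<in> t}|" using cof Fr unfolding is_cof_def by blast
    moreover have "|\<phi> ` {i. (i, j) \<in> t}| <o t"
      using card_of_image small ordLeq_ordLess_trans by blast
    ultimately show False using not_ordLess_ordLeq by blast
  qed
  then obtain e where e: "(i, j) \<in> t \<Longrightarrow> (\<phi> i, e j) \<in> r" for i j by metis
  show thesis
  proof
    fix x j
    assume "(H x, j) \<in> t"
    then have "(\<phi> (H x), e j) \<in> r" using e by blast
    then show "(x, e j) \<in> r \<and> x \<noteq> e j"
      using H card_order_trans[OF r] card_order_antisym[OF r] by metis
  qed
qed

theorem lemma3p1:
  fixes r :: "'m rel" and t :: "'c rel" and \<kappa> :: "'k rel"
  assumes "card_order r" and "singular_card r"
    and "card_order t" and "is_cof r t"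
    and "Card_order \<kappa>"
    and "dmu_star_eq r t \<kappa>"
  shows "dmu_eq r \<kappa>"
proof -
  obtain H e where "\<And>x j. (H x, j) \<in> t \<Longrightarrow> (x, e j) \<in> r \<and> x \<noteq> e j"
    using cofinal_sequence_bounds[OF assms(1,3,4)] by blast
  then show ?thesis using dmu_eq_if_dmu_star_eq[OF assms(1,3) _ assms(6)] by blast
qed

end
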